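(* Let $\varphi$ be a flow on a locally compact metric space $X$, $S\subset X$ a nonempty compact invariant set, and $\mathcal M=\{M_p\mid p\in\mathbb P\}$ an indexed family of mutually disjoint closed invariant subsets of $S$. Then $\mathcal M$ is a Morse predecomposition of $S$ if and only if $T\cap\bigcup_{p\in\mathbb P}M_p\ne\emptyset$ for every nonempty closed invariant set $T\subset S$.
   Context: A full solution is a map $\gamma:\mathbb R\to X$ with $\gamma(s+t)=\varphi(\gamma(s),t)$; it is in $S$ if its image lies in $S$. $\alpha(\gamma)=\bigcap_{t<0}\operatorname{cl}\gamma((-\infty,t])$, $\omega(\gamma)=\bigcap_{t>0}\operatorname{cl}\gamma([t,\infty))$. A set $A$ is invariant if $A=\{x\in A\mid\varphi(x,\mathbb R)\subset A\}$. A full solution $\gamma$ in $S$ is a link from $S_1$ to $S_2$ if $\alpha(\gamma)\cap S_1\ne\emptyset\ne\omega(\gamma)\cap S_2$. A Morse predecomposition of $S$ is an indexed family of mutually disjoint closed invariant subsets $\{M_p\mid p\in\mathbb P\}$ of $S$ such that every full solution in $S$ is a link from $M_p$ to $M_q$ for some $p,q\in\mathbb P$. *)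

theory Defs
  imports "HOL-Analysis.Analysis"
begin

text \<open>The phase space X is the whole (metric space) type 'a; a flow is a continuous
  map phi : X x R -> X with phi x 0 = x and phi (phi x s) t = phi x (s + t).\<close>

definition is_flow :: "('a::metric_space \<Rightarrow> real \<Rightarrow> 'a) \<Rightarrow> bool" where
  "is_flow \<phi> \<longleftrightarrow> continuous_on UNIV (\<lambda>(x, t). \<phi> x t)
     \<and> (\<forall>x. \<phi> x 0 = x) \<and> (\<forall>x s t. \<phi> (\<phi> x s) t = \<phi> x (s + t))"

definition full_solution :: "('a \<Rightarrow> real \<Rightarrow> 'a) \<Rightarrow> (real \<Rightarrow> 'a) \<Rightarrow> bool" where
  "full_solution \<phi> \<gamma> \<longleftrightarrow> (\<forall>s t. \<gamma> (s + t) = \<phi> (\<gamma> s) t)"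

definition full_solution_in :: "('a \<Rightarrow> real \<Rightarrow> 'a) \<Rightarrow> 'a set \<Rightarrow> (real \<Rightarrow> 'a) \<Rightarrow> bool" where
  "full_solution_in \<phi> S \<gamma> \<longleftrightarrow> full_solution \<phi> \<gamma> \<and> range \<gamma> \<subseteq> S"

definition alpha_limit :: "(real \<Rightarrow> 'a::topological_space) \<Rightarrow> 'a set" where
  "alpha_limit \<gamma> = (\<Inter>t\<in>{t. t < 0}. closure (\<gamma> ` {..t}))"

definition omega_limit :: "(real \<Rightarrow> 'a::topological_space) \<Rightarrow> 'a set" where
  "omega_limit \<gamma> = (\<Inter>t\<in>{t. t > 0}. closure (\<gamma> ` {t..}))"

definition invariant :: "('a \<Rightarrow> real \<Rightarrow> 'a) \<Rightarrow> 'a set \<Rightarrow> bool" where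
  "invariant \<phi> A \<longleftrightarrow> A = {x \<in> A. \<phi> x ` UNIV \<subseteq> A}"

definition is_link :: "('a::topological_space \<Rightarrow> real \<Rightarrow> 'a) \<Rightarrow> 'a set \<Rightarrow> (real \<Rightarrow> 'a) \<Rightarrow> 'a set \<Rightarrow> 'a set \<Rightarrow> bool" where
  "is_link \<phi> S \<gamma> S1 S2 \<longleftrightarrow> full_solution_in \<phi> S \<gamma>
     \<and> alpha_limit \<gamma> \<inter> S1 \<noteq> {} \<and> omega_limit \<gamma> \<inter> S2 \<noteq> {}"

definition morse_predecomposition ::
  "('a::topological_space \<Rightarrow> real \<Rightarrow> 'a) \<Rightarrow> 'a set \<Rightarrow> 'p set \<Rightarrow> ('p \<Rightarrow> 'a set) \<Rightarrow> bool" where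
  "morse_predecomposition \<phi> S P M \<longleftrightarrow>
     (\<forall>p\<in>P. \<forall>q\<in>P. p \<noteq> q \<longrightarrow> M p \<inter> M q = {})
     \<and> (\<forall>p\<in>P. closed (M p) \<and> invariant \<phi> (M p) \<and> M p \<subseteq> S)
     \<and> (\<forall>\<gamma>. full_solution_in \<phi> S \<gamma> \<longrightarrow> (\<exists>p\<in>P. \<exists>q\<in>P. is_link \<phi> S \<gamma> (M p) (M q)))"

end

theory Submission
  imports Defs
begin

text \<open>If every full solution in S links two Morse sets, then every nonempty closed invariant
  T \<subseteq> S meets some M p: the orbit of any point of T is a full solution whose \<omega>-limit set
  lies in T. Conversely, for compact S the \<alpha>- and \<omega>-limit sets of a full solution in S are
  nonempty closed invariant subsets of S, so each of them meets some M p, which makes the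
  solution a link. The \<alpha>-limit case reduces to the \<omega>-limit case by reversing time.\<close>

lemma invariant_iff: "invariant \<phi> A \<longleftrightarrow> (\<forall>x\<in>A. \<forall>t. \<phi> x t \<in> A)"
  unfolding invariant_def by blast

lemma invariant_reverse_time: "invariant (\<lambda>x t. \<phi> x (- t)) A \<longleftrightarrow> invariant \<phi> A"
  unfolding invariant_iff by (metis minus_minus)

lemma full_solution_reverse_time:
  "full_solution \<phi> \<gamma> \<Longrightarrow> full_solution (\<lambda>x t. \<phi> x (- t)) (\<lambda>t. \<gamma> (- t))"
  unfolding full_solution_def by (metis minus_add_distrib)

lemma alpha_limit_eq_omega_limit_reverse_time:
  "alpha_limit \<gamma> = omega_limit (\<lambda>t. \<gamma> (- t))"
proof -
  have "(\<lambda>t. \<gamma> (- t)) ` {t..} = \<gamma> ` {..- t}" for t :: real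
    by (force simp: image_image intro: image_eqI[of _ _ "- _"])
  moreover have "{t :: real. t < 0} = uminus ` {t. t > 0}"
    by (force intro: image_eqI[of _ _ "- _"])
  ultimately show ?thesis
    unfolding alpha_limit_def omega_limit_def by (simp add: image_image)
qed

lemma is_flow_continuous_on_time_slice:
  assumes "is_flow \<phi>"
  shows "continuous_on UNIV (\<lambda>x. \<phi> x t)"
proof -
  have "continuous_on UNIV (\<lambda>(x, t). \<phi> x t)"
    using assms unfolding is_flow_def by blast
  then have "continuous_on UNIV ((\<lambda>(x, t). \<phi> x t) \<circ> (\<lambda>x. (x, t)))"
    by (intro continuous_on_compose continuous_intros) (auto elim: continuous_on_subset)
  then show ?thesis by (simp add: o_def)
qed

lemma is_flow_full_solution_orbit: "is_flow \<phi> \<Longrightarrow> full_solution \<phi> (\<phi> x)"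
  unfolding is_flow_def full_solution_def by simp

lemma closed_omega_limit: "closed (omega_limit \<gamma>)"
  unfolding omega_limit_def by auto

lemma omega_limit_subset_closure_range: "omega_limit \<gamma> \<subseteq> closure (range \<gamma>)"
proof -
  have "omega_limit \<gamma> \<subseteq> closure (\<gamma> ` {1..})"
    unfolding omega_limit_def by auto
  also have "\<dots> \<subseteq> closure (range \<gamma>)"
    by (intro closure_mono) auto
  finally show ?thesis .
qed

lemma omega_limit_nonempty:
  fixes \<gamma> :: "real \<Rightarrow> 'a::metric_space"
  assumes "compact K" and "range \<gamma> \<subseteq> K"
  shows "omega_limit \<gamma> \<noteq> {}"
proof -
  obtain l r where r: "strict_mono r" and lim: "((\<lambda>n. \<gamma> (real n)) \<circ> r) \<longlonglongrightarrow> l"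
    using compact_imp_seq_compact[OF \<open>compact K\<close>] assms(2)
    by (metis (mono_tags, lifting) range_subsetD seq_compactE)
  have "l \<in> closure (\<gamma> ` {t..})" for t
  proof (rule Lim_in_closed_set[OF closed_closure _ _ lim])
    obtain N :: nat where N: "t \<le> real N"
      using real_arch_simple by blast
    have "\<gamma> (real (r n)) \<in> closure (\<gamma> ` {t..})" if "N \<le> n" for n
    proof -
      have "t \<le> real (r n)"
        using N seq_suble[OF r, of n] that by linarith
      then show ?thesis
        by (intro closure_subset[THEN subsetD] imageI) simp
    qed
    then show "\<forall>\<^sub>F n in sequentially. ((\<lambda>n. \<gamma> (real n)) \<circ> r) n \<in> closure (\<gamma> ` {t..})"
      by (auto intro: eventually_sequentiallyI)
  qed simp
  then have "l \<in> omega_limit \<gamma>"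
    unfolding omega_limit_def by blast
  then show ?thesis by blast
qed

lemma omega_limit_invariant:
  assumes cont: "\<And>t. continuous_on UNIV (\<lambda>x. \<phi> x t)" and sol: "full_solution \<phi> \<gamma>"
  shows "invariant \<phi> (omega_limit \<gamma>)"
  unfolding invariant_iff
proof (intro ballI allI)
  fix x t assume x: "x \<in> omega_limit \<gamma>"
  have "\<phi> x t \<in> closure (\<gamma> ` {r..})" if "r > 0" for r
  proof -
    define s where "s = max 1 (r - t)"
    have "x \<in> closure (\<gamma> ` {s..})"
      using x unfolding omega_limit_def s_def by auto
    then have "\<phi> x t \<in> closure ((\<lambda>x. \<phi> x t) ` \<gamma> ` {s..})"
      using image_closure_subset[OF continuous_on_subset[OF cont] closed_closure closure_subset]
      by blast
    also have "(\<lambda>x. \<phi> x t) ` \<gamma> ` {s..} = \<gamma> ` (\<lambda>u. u + t) ` {s..}"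
      using sol unfolding full_solution_def by (simp add: image_image)
    also have "closure (\<gamma> ` (\<lambda>u. u + t) ` {s..}) \<subseteq> closure (\<gamma> ` {r..})"
      unfolding s_def by (intro closure_mono) auto
    finally show ?thesis .
  qed
  then show "\<phi> x t \<in> omega_limit \<gamma>"
    unfolding omega_limit_def by blast
qed

lemma alpha_limit_invariant:
  assumes "\<And>t. continuous_on UNIV (\<lambda>x. \<phi> x t)" and "full_solution \<phi> \<gamma>"
  shows "invariant \<phi> (alpha_limit \<gamma>)"
  using omega_limit_invariant[of "\<lambda>x t. \<phi> x (- t)"] assms
  by (simp add: alpha_limit_eq_omega_limit_reverse_time invariant_reverse_time
      full_solution_reverse_time)

lemma limit_sets_of_full_solution_in_compact:
  fixes \<phi> :: "'a::metric_space \<Rightarrow> real \<Rightarrow> 'a"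
  assumes "is_flow \<phi>" and "compact S" and "full_solution_in \<phi> S \<gamma>"
  shows "omega_limit \<gamma> \<noteq> {}" "closed (omega_limit \<gamma>)" "invariant \<phi> (omega_limit \<gamma>)"
    "omega_limit \<gamma> \<subseteq> S"
    and "alpha_limit \<gamma> \<noteq> {}" "closed (alpha_limit \<gamma>)" "invariant \<phi> (alpha_limit \<gamma>)"
    "alpha_limit \<gamma> \<subseteq> S"
proof -
  have cont: "\<And>t. continuous_on UNIV (\<lambda>x. \<phi> x t)" and sol: "full_solution \<phi> \<gamma>"
    and range: "range \<gamma> \<subseteq> S" and range_reverse: "range (\<lambda>t. \<gamma> (- t)) \<subseteq> S"
    using assms is_flow_continuous_on_time_slice unfolding full_solution_in_def by auto
  have "closure S = S"
    using \<open>compact S\<close> by (simp add: compact_imp_closed)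
  then have closure_range: "closure (range \<gamma>) \<subseteq> S" "closure (range (\<lambda>t. \<gamma> (- t))) \<subseteq> S"
    using closure_mono[OF range] closure_mono[OF range_reverse] by auto
  show "omega_limit \<gamma> \<noteq> {}" "closed (omega_limit \<gamma>)" "invariant \<phi> (omega_limit \<gamma>)"
    "omega_limit \<gamma> \<subseteq> S"
    using omega_limit_nonempty[OF \<open>compact S\<close> range] closed_omega_limit
      omega_limit_invariant[OF cont sol] omega_limit_subset_closure_range[of \<gamma>] closure_range
    by auto
  show "invariant \<phi> (alpha_limit \<gamma>)"
    using alpha_limit_invariant[OF cont sol] .
  show "alpha_limit \<gamma> \<noteq> {}" "closed (alpha_limit \<gamma>)" "alpha_limit \<gamma> \<subseteq> S"
    unfolding alpha_limit_eq_omega_limit_reverse_time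
    using omega_limit_nonempty[OF \<open>compact S\<close> range_reverse] closed_omega_limit
      omega_limit_subset_closure_range[of "\<lambda>t. \<gamma> (- t)"] closure_range
    by auto
qed

lemma morse_predecompositionE:
  assumes "morse_predecomposition \<phi> S P M" and "full_solution_in \<phi> S \<gamma>"
  obtains p q where "p \<in> P" "q \<in> P" "is_link \<phi> S \<gamma> (M p) (M q)"
  using assms unfolding morse_predecomposition_def by meson

theorem proposition5p3:
  fixes \<phi> :: "'a::metric_space \<Rightarrow> real \<Rightarrow> 'a"
    and S :: "'a set" and P :: "'p set" and M :: "'p \<Rightarrow> 'a set"
  assumes "locally compact (UNIV :: 'a set)"
    and "is_flow \<phi>"
    and "S \<noteq> {}" and "compact S" and "invariant \<phi> S"
    and "\<forall>p\<in>P. \<forall>q\<in>P. p \<noteq> q \<longrightarrow> M p \<inter> M q = {}"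
    and "\<forall>p\<in>P. closed (M p) \<and> invariant \<phi> (M p) \<and> M p \<subseteq> S"
  shows "morse_predecomposition \<phi> S P M \<longleftrightarrow>
    (\<forall>T. T \<noteq> {} \<and> closed T \<and> invariant \<phi> T \<and> T \<subseteq> S \<longrightarrow> T \<inter> (\<Union>p\<in>P. M p) \<noteq> {})"
proof (intro iffI allI impI)
  fix T assume "morse_predecomposition \<phi> S P M"
    and T: "T \<noteq> {} \<and> closed T \<and> invariant \<phi> T \<and> T \<subseteq> S"
  from T obtain x where "x \<in> T" by blast
  with T have orbit: "range (\<phi> x) \<subseteq> T"
    unfolding invariant_iff by blast
  with T have "full_solution_in \<phi> S (\<phi> x)"
    using is_flow_full_solution_orbit[OF assms(2)] unfolding full_solution_in_def by blast
  with \<open>morse_predecomposition \<phi> S P M\<close> obtain p q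
    where "p \<in> P" "q \<in> P" "is_link \<phi> S (\<phi> x) (M p) (M q)"
    by (rule morse_predecompositionE)
  moreover have "omega_limit (\<phi> x) \<subseteq> T"
    using omega_limit_subset_closure_range[of "\<phi> x"] closure_minimal[OF orbit] T by blast
  ultimately show "T \<inter> (\<Union>p\<in>P. M p) \<noteq> {}"
    unfolding is_link_def by blast
next
  assume meets: "\<forall>T. T \<noteq> {} \<and> closed T \<and> invariant \<phi> T \<and> T \<subseteq> S \<longrightarrow> T \<inter> (\<Union>p\<in>P. M p) \<noteq> {}"
  have "\<exists>p\<in>P. \<exists>q\<in>P. is_link \<phi> S \<gamma> (M p) (M q)" if sol: "full_solution_in \<phi> S \<gamma>" for \<gamma>
  proof -
    note limit_sets = limit_sets_of_full_solution_in_compact[OF assms(2,4) sol]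
    obtain p where "p \<in> P" "alpha_limit \<gamma> \<inter> M p \<noteq> {}"
      using meets[rule_format, of "alpha_limit \<gamma>"] limit_sets by blast
    moreover obtain q where "q \<in> P" "omega_limit \<gamma> \<inter> M q \<noteq> {}"
      using meets[rule_format, of "omega_limit \<gamma>"] limit_sets by blast
    ultimately show ?thesis
      using sol unfolding is_link_def by blast
  qed
  then show "morse_predecomposition \<phi> S P M"
    unfolding morse_predecomposition_def using assms(6,7) by blast
qed

end
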